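(* Let $(G,D,\star)$ be a probabilistic metric space with $\star$ continuous. Let $f,g\in\Pi(G)$ and let $(a_n),(b_n)\subset G$ be any Cauchy sequences such that $D(a_n,x)\xrightarrow{w}f(x)$ and $D(b_n,x)\xrightarrow{w}g(x)$ for all $x\in G$. Then the weak limit $\lim_{n,m\to\infty}D(a_n,b_m)$ exists, does not depend on the choice of the sequences $(a_n),(b_n)$, and $$\sup_{x\in G}f(x)\star g(x)=\lim_{n,m}D(a_n,b_m)=\lim_n D(a_n,b_n)=\lim_m f(b_m)=\lim_n g(a_n),$$ all limits being weak limits in $\Delta^+$.
   Context: A distribution function is a nondecreasing, left-continuous function $F:[-\infty,+\infty]\to[0,1]$ with $F(-\infty)=0$, $F(+\infty)=1$; $\Delta^+$ is the set of distribution functions with $F(0)=0$, ordered pointwise (a complete lattice with maximum $\mathcal H_0$, $\mathcal H_0(t)=0$ for $t\le0$, $1$ for $t>0$). A triangle function is a binary operation $\star$ on $\Delta^+$ that is commutative, associative, nondecreasing in each argument, with $F\star\mathcal H_0=F$. $F_n\xrightarrow{w}F$ means $F_n(t)\to F(t)$ at every continuity point $t\in\mathbb R$ of $F$; $\star$ is continuous if $F_n\star L_n\xrightarrow{w}F\star L$ whenever $F_n\xrightarrow{w}F$, $L_n\xrightarrow{w}L$. A probabilistic metric space $(G,D,\star)$ consists of a set $G$, a triangle function $\star$ and $D:G\times G\to\Delta^+$ with (i) $D(p,q)=\mathcal H_0$ iff $p=q$; (ii) $D(p,q)=D(q,p)$; (iii) $D(p,q)\star D(q,r)\le D(p,r)$.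 A sequence $(z_n)\subset G$ is Cauchy if $D(z_n,z_p)\xrightarrow{w}\mathcal H_0$ as $n,p\to\infty$. A map $f:G\to\Delta^+$ is probabilistic $1$-Lipschitz if $D(x,y)\star f(y)\le f(x)$ for all $x,y$. $\Pi(G)$ is the set of probabilistic $1$-Lipschitz maps $f$ for which there is a Cauchy sequence $(a_n)\subset G$ with $D(a_n,x)\xrightarrow{w}f(x)$ for all $x\in G$. *)

theory Defs
  imports "HOL-Analysis.Analysis"
begin

type_synonym dfun = "ereal \<Rightarrow> real"

definition distfun :: "dfun \<Rightarrow> bool" where
  "distfun F \<longleftrightarrow> mono F \<and> (\<forall>t. 0 \<le> F t \<and> F t \<le> 1)
     \<and> (\<forall>x::real. ((\<lambda>s. F (ereal s)) \<longlongrightarrow> F (ereal x)) (at_left x))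
     \<and> F (-\<infinity>) = 0 \<and> F \<infinity> = 1"

definition Dplus :: "dfun \<Rightarrow> bool" where
  "Dplus F \<longleftrightarrow> distfun F \<and> F 0 = 0"

definition H0 :: dfun where
  "H0 t = (if t \<le> 0 then 0 else 1)"

definition wconv :: "('i \<Rightarrow> dfun) \<Rightarrow> dfun \<Rightarrow> 'i filter \<Rightarrow> bool" where
  "wconv Fs F net \<longleftrightarrow> (\<forall>t::real. isCont (\<lambda>s. F (ereal s)) t \<longrightarrow>
      ((\<lambda>i. Fs i (ereal t)) \<longlongrightarrow> F (ereal t)) net)"

definition triangle_function :: "(dfun \<Rightarrow> dfun \<Rightarrow> dfun) \<Rightarrow> bool" where
  "triangle_function star \<longleftrightarrow>
     (\<forall>F L. Dplus F \<and> Dplus L \<longrightarrow> Dplus (star F L))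
   \<and> (\<forall>F L. Dplus F \<and> Dplus L \<longrightarrow> star F L = star L F)
   \<and> (\<forall>F L K. Dplus F \<and> Dplus L \<and> Dplus K \<longrightarrow> star (star F L) K = star F (star L K))
   \<and> (\<forall>F F' L. Dplus F \<and> Dplus F' \<and> Dplus L \<and> F \<le> F' \<longrightarrow> star F L \<le> star F' L)
   \<and> (\<forall>F. Dplus F \<longrightarrow> star F H0 = F)"

definition continuous_tf :: "(dfun \<Rightarrow> dfun \<Rightarrow> dfun) \<Rightarrow> bool" where
  "continuous_tf star \<longleftrightarrow>
     (\<forall>Fs Ls F L. (\<forall>n. Dplus (Fs n)) \<and> (\<forall>n. Dplus (Ls n)) \<and> Dplus F \<and> Dplus L
        \<and> wconv Fs F sequentially \<and> wconv Ls L sequentially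
        \<longrightarrow> wconv (\<lambda>n. star (Fs n) (Ls n)) (star F L) sequentially)"

definition pms :: "'a set \<Rightarrow> ('a \<Rightarrow> 'a \<Rightarrow> dfun) \<Rightarrow> (dfun \<Rightarrow> dfun \<Rightarrow> dfun) \<Rightarrow> bool" where
  "pms G D star \<longleftrightarrow> triangle_function star
     \<and> (\<forall>p\<in>G. \<forall>q\<in>G. Dplus (D p q))
     \<and> (\<forall>p\<in>G. \<forall>q\<in>G. D p q = H0 \<longleftrightarrow> p = q)
     \<and> (\<forall>p\<in>G. \<forall>q\<in>G. D p q = D q p)
     \<and> (\<forall>p\<in>G. \<forall>q\<in>G. \<forall>r\<in>G. star (D p q) (D q r) \<le> D p r)"

definition pm_cauchy :: "'a set \<Rightarrow> ('a \<Rightarrow> 'a \<Rightarrow> dfun) \<Rightarrow> (nat \<Rightarrow> 'a) \<Rightarrow> bool" where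
  "pm_cauchy G D z \<longleftrightarrow> (\<forall>n. z n \<in> G)
     \<and> wconv (\<lambda>(n, p). D (z n) (z p)) H0 (sequentially \<times>\<^sub>F sequentially)"

definition prob_lip1 :: "'a set \<Rightarrow> ('a \<Rightarrow> 'a \<Rightarrow> dfun) \<Rightarrow> (dfun \<Rightarrow> dfun \<Rightarrow> dfun)
    \<Rightarrow> ('a \<Rightarrow> dfun) \<Rightarrow> bool" where
  "prob_lip1 G D star f \<longleftrightarrow> (\<forall>x\<in>G. Dplus (f x))
     \<and> (\<forall>x\<in>G. \<forall>y\<in>G. star (D x y) (f y) \<le> f x)"

definition PiG :: "'a set \<Rightarrow> ('a \<Rightarrow> 'a \<Rightarrow> dfun) \<Rightarrow> (dfun \<Rightarrow> dfun \<Rightarrow> dfun)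
    \<Rightarrow> ('a \<Rightarrow> dfun) \<Rightarrow> bool" where
  "PiG G D star f \<longleftrightarrow> prob_lip1 G D star f
     \<and> (\<exists>a. pm_cauchy G D a \<and> (\<forall>x\<in>G. wconv (\<lambda>n. D (a n) x) (f x) sequentially))"

definition is_Dsup :: "dfun set \<Rightarrow> dfun \<Rightarrow> bool" where
  "is_Dsup S L \<longleftrightarrow> Dplus L \<and> (\<forall>F\<in>S. F \<le> L)
     \<and> (\<forall>U. Dplus U \<and> (\<forall>F\<in>S. F \<le> U) \<longrightarrow> L \<le> U)"

end

theory Submission
  imports Defs "HOL-Probability.Helly_Selection"
begin

text \<open>The cross distances \<open>D(a\<^sub>n, b\<^sub>m)\<close> converge as \<open>n, m \<rightarrow> \<infinity>\<close>: by Helly's selection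
  theorem every way of letting \<open>n, m \<rightarrow> \<infinity>\<close> has a subsequence along which they converge weakly,
  and the triangle inequality together with continuity of \<open>\<star>\<close> squeezes
  \<open>D(a\<^sub>n, b\<^sub>m)\<close> between distances along the Cauchy sequences, which tend to \<open>H\<^sub>0\<close>, so all
  these subsequential limits coincide. Iterated limits then identify the double limit \<open>L\<close> with
  the limits of \<open>f(b\<^sub>m)\<close>, \<open>g(a\<^sub>n)\<close> and \<open>D(a\<^sub>n, b\<^sub>n)\<close>. Finally
  \<open>D(a\<^sub>n, x) \<star> D(x, b\<^sub>n) \<le> D(a\<^sub>n, b\<^sub>n)\<close> gives \<open>f(x) \<star> g(x) \<le> L\<close>, while
  \<open>L\<close> is the limit of \<open>f(b\<^sub>m) \<star> g(b\<^sub>m)\<close> because \<open>g(b\<^sub>m) \<rightarrow> H\<^sub>0\<close>; so \<open>L\<close> is the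
  supremum of the \<open>f(x) \<star> g(x)\<close>, which also shows that it does not depend on the sequences.\<close>

lemma Dplus_mono: "Dplus F \<Longrightarrow> mono F"
  by (simp add: Dplus_def distfun_def)

lemma Dplus_nonneg: "Dplus F \<Longrightarrow> 0 \<le> F t"
  by (simp add: Dplus_def distfun_def)

lemma Dplus_le_one: "Dplus F \<Longrightarrow> F t \<le> 1"
  by (simp add: Dplus_def distfun_def)

lemma Dplus_PInf: "Dplus F \<Longrightarrow> F \<infinity> = 1"
  by (simp add: Dplus_def distfun_def)

lemma Dplus_MInf: "Dplus F \<Longrightarrow> F (-\<infinity>) = 0"
  by (simp add: Dplus_def distfun_def)

lemma Dplus_left_continuous: "Dplus F \<Longrightarrow> ((\<lambda>s. F (ereal s)) \<longlongrightarrow> F (ereal x)) (at_left x)"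
  by (simp add: Dplus_def distfun_def)

lemma Dplus_eq_0_nonpos:
  assumes "Dplus F" and "t \<le> 0"
  shows "F t = 0"
proof -
  have "F t \<le> F 0" using Dplus_mono[OF assms(1)] assms(2) by (simp add: monoD)
  with assms(1) show ?thesis by (auto simp: Dplus_def distfun_def intro: antisym)
qed

lemma mono_Dplus_real: "Dplus F \<Longrightarrow> mono (\<lambda>s. F (ereal s))"
  by (auto simp: mono_def dest: Dplus_mono monoD)

lemma countable_discont_Dplus: "Dplus F \<Longrightarrow> countable {s. \<not> isCont (\<lambda>s. F (ereal s)) s}"
  by (rule mono_ctble_discont[OF mono_Dplus_real])

lemma Dplus_H0: "Dplus H0"
proof -
  have "eventually (\<lambda>s. H0 (ereal s) = H0 (ereal x)) (at_left x)" for x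
  proof (cases "x \<le> 0")
    case True
    show ?thesis
      using eventually_at_left_real[of "x - 1" x] by (rule eventually_mono) (use True in \<open>auto simp: H0_def\<close>)
  next
    case False
    show ?thesis
      using eventually_at_left_real[of 0 x] False by (auto simp: H0_def elim: eventually_mono)
  qed
  then have "((\<lambda>s. H0 (ereal s)) \<longlongrightarrow> H0 (ereal x)) (at_left x)" for x
    by (rule tendsto_eventually)
  moreover have "mono H0" by (auto simp: mono_def H0_def)
  ultimately show ?thesis by (auto simp: Dplus_def distfun_def H0_def)
qed

lemma is_Dsup_unique: "is_Dsup S L \<Longrightarrow> is_Dsup S L' \<Longrightarrow> L = L'"
  unfolding is_Dsup_def by (simp add: antisym)

lemma eventually_at_left_avoid_countable:
  fixes x :: real
  assumes "countable C" and "eventually P (at_left x)"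
  shows "\<exists>s<x. P s \<and> s \<notin> C"
proof -
  obtain b where "b < x" and P: "\<And>y. b < y \<Longrightarrow> y < x \<Longrightarrow> P y"
    using assms(2) by (auto simp: eventually_at_left_field)
  moreover obtain s where "s \<in> {b<..<x}" "s \<notin> C"
    using open_minus_countable[OF assms(1), of "{b<..<x}"] \<open>b < x\<close> by auto
  ultimately show ?thesis by auto
qed

lemma eventually_at_right_avoid_countable:
  fixes x :: real
  assumes "countable C" and "eventually P (at_right x)"
  shows "\<exists>s>x. P s \<and> s \<notin> C"
proof -
  obtain b where "x < b" and P: "\<And>y. x < y \<Longrightarrow> y < b \<Longrightarrow> P y"
    using assms(2) by (auto simp: eventually_at_right_field)
  moreover obtain s where "s \<in> {x<..<b}" "s \<notin> C"
    using open_minus_countable[OF assms(1), of "{x<..<b}"] \<open>x < b\<close> by auto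
  ultimately show ?thesis by auto
qed

section \<open>Weak convergence\<close>

lemma wconv_const: "wconv (\<lambda>_. U) U net"
  by (simp add: wconv_def)

lemma wconv_compose:
  assumes "wconv X L F" and "filterlim q F G"
  shows "wconv (\<lambda>k. X (q k)) L G"
  using assms by (auto simp: wconv_def intro: filterlim_compose[where f = q])

lemma wconv_prod_compose:
  assumes "wconv (\<lambda>(n, m). X n m) L (sequentially \<times>\<^sub>F sequentially)"
    and "filterlim i sequentially F" and "filterlim j sequentially F"
  shows "wconv (\<lambda>k. X (i k) (j k)) L F"
  using wconv_compose[OF assms(1) filterlim_Pair[OF assms(2,3)]] by simp

lemma wconv_prod_swap:
  assumes "wconv (\<lambda>(n, m). X n m) L (F \<times>\<^sub>F G)"
  shows "wconv (\<lambda>(m, n). X n m) L (G \<times>\<^sub>F F)"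
  using wconv_compose[OF assms filterlim_Pair[OF filterlim_snd filterlim_fst]]
  by (simp add: case_prod_unfold)

lemma wconv_lower_bound:
  assumes F: "mono (\<lambda>s. F (ereal s))" and Fs: "\<And>i. mono (Fs i)"
    and lim: "wconv Fs F net" and "net \<noteq> bot"
    and ev: "eventually (\<lambda>i. c \<le> Fs i (ereal x)) net" and "x < t"
  shows "c \<le> F (ereal t)"
proof -
  obtain s where s: "x < s" "s < t" "isCont (\<lambda>s. F (ereal s)) s"
    using eventually_at_left_avoid_countable[OF mono_ctble_discont[OF F]
        eventually_at_left_real[OF \<open>x < t\<close>]] by auto
  have mono_i: "Fs i (ereal x) \<le> Fs i (ereal s)" for i using Fs s(1) by (simp add: monoD)
  have "eventually (\<lambda>i. c \<le> Fs i (ereal s)) net"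
    using ev by eventually_elim (rule order_trans[OF _ mono_i])
  with lim s(3) \<open>net \<noteq> bot\<close> have "c \<le> F (ereal s)"
    by (auto simp: wconv_def intro: tendsto_lowerbound)
  also have "\<dots> \<le> F (ereal t)" using monoD[OF F] s(2) by simp
  finally show ?thesis .
qed

lemma wconv_upper_bound:
  assumes F: "mono (\<lambda>s. F (ereal s))" and Fs: "\<And>i. mono (Fs i)"
    and lim: "wconv Fs F net" and "net \<noteq> bot"
    and ev: "eventually (\<lambda>i. Fs i (ereal x) \<le> c) net" and "t < x"
  shows "F (ereal t) \<le> c"
proof -
  obtain s where s: "t < s" "s < x" "isCont (\<lambda>s. F (ereal s)) s"
    using eventually_at_right_avoid_countable[OF mono_ctble_discont[OF F]
        eventually_at_right_real[OF \<open>t < x\<close>]] by auto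
  have mono_i: "Fs i (ereal s) \<le> Fs i (ereal x)" for i using Fs s(2) by (simp add: monoD)
  have "eventually (\<lambda>i. Fs i (ereal s) \<le> c) net"
    using ev by eventually_elim (rule order_trans[OF mono_i])
  with lim s(3) \<open>net \<noteq> bot\<close> have "F (ereal s) \<le> c"
    by (auto simp: wconv_def intro: tendsto_upperbound)
  have "F (ereal t) \<le> F (ereal s)" using monoD[OF F] s(1) by simp
  also have "\<dots> \<le> c" by fact
  finally show ?thesis .
qed

lemma wconv_le:
  assumes F: "Dplus F" and H: "Dplus H" and limF: "wconv Fs F net" and limH: "wconv Hs H net"
    and "net \<noteq> bot" and le: "\<And>i. Fs i \<le> Hs i"
  shows "F \<le> H"
proof (rule le_funI)
  fix t :: ereal
  show "F t \<le> H t"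
  proof (cases t)
    case (real x)
    show ?thesis
    proof (rule ccontr)
      assume "\<not> F t \<le> H t"
      with real have "eventually (\<lambda>s. H (ereal x) < F (ereal s)) (at_left x)"
        by (intro order_tendstoD(1)[OF Dplus_left_continuous[OF F]]) simp
      then obtain s where "s < x" and HF: "H (ereal x) < F (ereal s)"
        and "isCont (\<lambda>s. F (ereal s)) s" "isCont (\<lambda>s. H (ereal s)) s"
        using eventually_at_left_avoid_countable
          [OF countable_Un[OF countable_discont_Dplus[OF F] countable_discont_Dplus[OF H]]]
        by blast
      with limF limH have "((\<lambda>i. Fs i (ereal s)) \<longlongrightarrow> F (ereal s)) net"
        "((\<lambda>i. Hs i (ereal s)) \<longlongrightarrow> H (ereal s)) net"
        by (simp_all add: wconv_def)
      then have "F (ereal s) \<le> H (ereal s)"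
        using \<open>net \<noteq> bot\<close> le by (auto intro: tendsto_le simp: le_fun_def)
      moreover have "H (ereal s) \<le> H (ereal x)"
        using monoD[OF Dplus_mono[OF H]] \<open>s < x\<close> by simp
      ultimately show False using HF by simp
    qed
  qed (simp_all add: Dplus_PInf Dplus_MInf F H)
qed

context
  fixes X :: "nat \<Rightarrow> nat \<Rightarrow> dfun" and H :: "nat \<Rightarrow> dfun" and L :: dfun
  assumes XD: "\<And>n m. Dplus (X n m)" and LD: "Dplus L" and HD: "\<And>m. Dplus (H m)"
    and X: "wconv (\<lambda>(n, m). X n m) L (sequentially \<times>\<^sub>F sequentially)"
    and XH: "\<And>m. wconv (\<lambda>n. X n m) (H m) sequentially"
begin

lemma tendsto_iterated_limit_at:
  "isCont (\<lambda>s. L (ereal s)) s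
    \<Longrightarrow> ((\<lambda>(n, m). X n m (ereal s)) \<longlongrightarrow> L (ereal s)) (sequentially \<times>\<^sub>F sequentially)"
  using X by (simp add: wconv_def case_prod_unfold)

lemma eventually_gt_iterated_limit:
  assumes "c < L (ereal t)"
  shows "eventually (\<lambda>m. c < H m (ereal t)) sequentially"
proof -
  obtain c' where "c < c'" "c' < L (ereal t)" using assms dense by blast
  then have "eventually (\<lambda>s. c' < L (ereal s)) (at_left t)"
    by (intro order_tendstoD(1)[OF Dplus_left_continuous[OF LD]])
  then obtain t1 where "t1 < t" "c' < L (ereal t1)" "isCont (\<lambda>s. L (ereal s)) t1"
    using eventually_at_left_avoid_countable[OF countable_discont_Dplus[OF LD]] by blast
  then obtain N where N: "\<And>n m. N \<le> n \<Longrightarrow> N \<le> m \<Longrightarrow> c' < X n m (ereal t1)"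
    using order_tendstoD(1)[OF tendsto_iterated_limit_at] by (fastforce simp: eventually_prod_sequentially)
  have "c' \<le> H m (ereal t)" if "N \<le> m" for m
    using N that \<open>t1 < t\<close>
    by (intro wconv_lower_bound[OF mono_Dplus_real[OF HD] Dplus_mono[OF XD] XH])
      (auto simp: eventually_sequentially less_imp_le intro!: exI[of _ N])
  with \<open>c < c'\<close> show ?thesis
    by (auto simp: eventually_sequentially intro: less_le_trans)
qed

lemma eventually_lt_iterated_limit:
  assumes "isCont (\<lambda>s. L (ereal s)) t" and "L (ereal t) < c"
  shows "eventually (\<lambda>m. H m (ereal t) < c) sequentially"
proof -
  obtain c' where "c' < c" "L (ereal t) < c'" using assms(2) dense by blast
  moreover have "((\<lambda>s. L (ereal s)) \<longlongrightarrow> L (ereal t)) (at_right t)"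
    using assms(1) by (simp add: isCont_def filterlim_at_split)
  ultimately have "eventually (\<lambda>s. L (ereal s) < c') (at_right t)"
    by (intro order_tendstoD(2))
  then obtain t2 where "t < t2" "L (ereal t2) < c'" "isCont (\<lambda>s. L (ereal s)) t2"
    using eventually_at_right_avoid_countable[OF countable_discont_Dplus[OF LD]] by blast
  then obtain N where N: "\<And>n m. N \<le> n \<Longrightarrow> N \<le> m \<Longrightarrow> X n m (ereal t2) < c'"
    using order_tendstoD(2)[OF tendsto_iterated_limit_at] by (fastforce simp: eventually_prod_sequentially)
  have "H m (ereal t) \<le> c'" if "N \<le> m" for m
    using N that \<open>t < t2\<close>
    by (intro wconv_upper_bound[OF mono_Dplus_real[OF HD] Dplus_mono[OF XD] XH])
      (auto simp: eventually_sequentially less_imp_le intro!: exI[of _ N])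
  with \<open>c' < c\<close> show ?thesis
    by (auto simp: eventually_sequentially intro: le_less_trans)
qed

lemma wconv_iterated_limit: "wconv H L sequentially"
  unfolding wconv_def
  by (blast intro: order_tendstoI eventually_gt_iterated_limit eventually_lt_iterated_limit)

end

section \<open>Helly's selection theorem and double limits\<close>

definition dfun_of_real :: "(real \<Rightarrow> real) \<Rightarrow> dfun" where
  "dfun_of_real g t = (case t of ereal x \<Rightarrow> g x | PInfty \<Rightarrow> 1 | MInfty \<Rightarrow> 0)"

lemma dfun_of_real_ereal [simp]: "dfun_of_real g (ereal x) = g x"
  by (simp add: dfun_of_real_def)

lemma Dplus_dfun_of_real:
  assumes "mono g" and "\<And>x. 0 \<le> g x" and "\<And>x. g x \<le> 1" and "g 0 = 0"
    and "\<And>x. (g \<longlongrightarrow> g x) (at_left x)"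
  shows "Dplus (dfun_of_real g)"
proof -
  have "mono (dfun_of_real g)"
  proof
    fix s t :: ereal assume "s \<le> t"
    then show "dfun_of_real g s \<le> dfun_of_real g t"
      by (cases s; cases t) (auto simp: dfun_of_real_def assms monoD)
  qed
  with assms show ?thesis
    by (auto simp: Dplus_def distfun_def dfun_of_real_def zero_ereal_def split: ereal.split)
qed

text \<open>The library's version of Helly's theorem is about right-continuous functions, so apply it to
  the reflections \<open>x \<mapsto> -f(-x)\<close> and reflect the limit back.\<close>
lemma Helly_selection_left_continuous:
  fixes f :: "nat \<Rightarrow> real \<Rightarrow> real"
  assumes left: "\<And>n x. (f n \<longlongrightarrow> f n x) (at_left x)" and mono: "\<And>n. mono (f n)"
    and bdd: "\<And>n x. \<bar>f n x\<bar> \<le> M"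
  shows "\<exists>r g. strict_mono r \<and> mono g \<and> (\<forall>x. (g \<longlongrightarrow> g x) (at_left x))
    \<and> (\<forall>x. isCont g x \<longrightarrow> (\<lambda>n. f (r n) x) \<longlonglongrightarrow> g x)"
proof -
  define h where "h n x = - f n (- x)" for n x
  have "continuous (at_right x) (h n)" for n x
  proof -
    have "((\<lambda>y. f n (- y)) \<longlongrightarrow> f n (- x)) (at_right x)"
      using left[of n "- x"] by (simp add: filterlim_at_left_to_right)
    then have "(h n \<longlongrightarrow> h n x) (at_right x)" unfolding h_def by (rule tendsto_minus)
    then show ?thesis by (simp add: continuous_within)
  qed
  moreover have "mono (h n)" for n
    using monoD[OF mono] by (auto simp: h_def mono_def)
  moreover have "\<bar>h n x\<bar> \<le> M" for n x
    using bdd by (simp add: h_def)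
  ultimately obtain r F where r: "strict_mono r" and F_right: "\<And>x. continuous (at_right x) F"
    and "mono F" and F_lim: "\<And>x. isCont F x \<Longrightarrow> (\<lambda>n. h (r n) x) \<longlonglongrightarrow> F x"
    using Helly_selection[of h M] by blast
  define g where "g x = - F (- x)" for x
  have "mono g" using \<open>mono F\<close> by (auto simp: g_def mono_def monoD)
  moreover have "(g \<longlongrightarrow> g x) (at_left x)" for x
  proof -
    have "(F \<longlongrightarrow> F (- x)) (at_right (- x))" using F_right by (simp add: continuous_within)
    then have "((\<lambda>y. - F (- y)) \<longlongrightarrow> g x) (at_left x)"
      by (auto simp: filterlim_at_left_to_right g_def intro: tendsto_minus)
    then show ?thesis by (simp add: g_def[abs_def])
  qed
  moreover have "(\<lambda>n. f (r n) x) \<longlonglongrightarrow> g x" if "isCont g x" for x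
  proof -
    have "isCont (\<lambda>y. - g (- y)) (- x)"
      using that isCont_o2[where f = uminus and a = "- x" and g = g] by (simp add: continuous_intros)
    moreover have "(\<lambda>y. - g (- y)) = F" by (simp add: g_def)
    ultimately have "(\<lambda>n. h (r n) (- x)) \<longlonglongrightarrow> F (- x)" by (intro F_lim) simp
    then have "(\<lambda>n. - h (r n) (- x)) \<longlonglongrightarrow> g x" unfolding g_def by (rule tendsto_minus)
    then show ?thesis by (simp add: h_def)
  qed
  ultimately show ?thesis using r by blast
qed

lemma Helly_selection_Dplus:
  fixes Fs :: "nat \<Rightarrow> dfun"
  assumes FD: "\<And>k. Dplus (Fs k)"
  shows "\<exists>r L. strict_mono r \<and> Dplus L \<and> wconv (\<lambda>k. Fs (r k)) L sequentially"
proof -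
  have "\<bar>Fs k (ereal x)\<bar> \<le> 1" for k x
    using Dplus_nonneg[OF FD] Dplus_le_one[OF FD] by (simp add: abs_le_iff)
  then obtain r g where r: "strict_mono r" and "mono g" and g_left: "\<And>x. (g \<longlongrightarrow> g x) (at_left x)"
    and g_lim: "\<And>x. isCont g x \<Longrightarrow> (\<lambda>n. Fs (r n) (ereal x)) \<longlonglongrightarrow> g x"
    using Helly_selection_left_continuous[of "\<lambda>k s. Fs k (ereal s)" 1]
      Dplus_left_continuous[OF FD] mono_Dplus_real[OF FD] by blast
  have lim: "wconv (\<lambda>k. Fs (r k)) (dfun_of_real g) sequentially"
    using g_lim by (simp add: wconv_def)
  have g_mono: "mono (\<lambda>s. dfun_of_real g (ereal s))" using \<open>mono g\<close> by simp
  note lower = wconv_lower_bound[OF g_mono Dplus_mono[OF FD] lim sequentially_bot]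
  note upper = wconv_upper_bound[OF g_mono Dplus_mono[OF FD] lim sequentially_bot]
  have g_nonneg: "0 \<le> g x" for x
    using lower[of 0 "x - 1" x] by (simp add: Dplus_nonneg[OF FD])
  have g_le_one: "g x \<le> 1" for x
    using upper[of "x + 1" 1 x] by (simp add: Dplus_le_one[OF FD])
  have g_neg: "g x = 0" if "x < 0" for x
    using upper[of "x / 2" 0 x] that g_nonneg[of x] by (simp add: Dplus_eq_0_nonpos[OF FD])
  have "eventually (\<lambda>s. g s = 0) (at_left (0::real))"
    unfolding eventually_at_left_field by (auto intro!: exI[of _ "-1"] g_neg)
  then have "(g \<longlongrightarrow> 0) (at_left 0)" by (rule tendsto_eventually)
  then have "g 0 = 0" using g_left[of 0] tendsto_unique[OF trivial_limit_at_left_real] by blast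
  then have "Dplus (dfun_of_real g)"
    using \<open>mono g\<close> g_nonneg g_le_one g_left by (intro Dplus_dfun_of_real)
  with r lim show ?thesis by blast
qed

text \<open>A subsequence of the diagonal has a weak limit \<open>L\<close>; if the double sequence did not converge to
  it, some way of letting \<open>n, m \<rightarrow> \<infinity>\<close> would stay away from \<open>L\<close>, yet by Helly it has a
  subsequence whose limit, being comparable with \<open>L\<close> both ways, equals \<open>L\<close>.\<close>
lemma ex_wconv_prod_sequentially:
  fixes X :: "nat \<Rightarrow> nat \<Rightarrow> dfun"
  assumes XD: "\<And>n m. Dplus (X n m)"
    and comparable: "\<And>i j i' j' L L'. filterlim i sequentially sequentially
      \<Longrightarrow> filterlim j sequentially sequentially \<Longrightarrow> filterlim i' sequentially sequentially
      \<Longrightarrow> filterlim j' sequentially sequentially \<Longrightarrow> Dplus L \<Longrightarrow> Dplus L'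
      \<Longrightarrow> wconv (\<lambda>k. X (i k) (j k)) L sequentially \<Longrightarrow> wconv (\<lambda>k. X (i' k) (j' k)) L' sequentially
      \<Longrightarrow> L \<le> L'"
  shows "\<exists>L. Dplus L \<and> wconv (\<lambda>(n, m). X n m) L (sequentially \<times>\<^sub>F sequentially)"
proof -
  obtain r L where r: "strict_mono r" and LD: "Dplus L"
    and lim: "wconv (\<lambda>k. X (r k) (r k)) L sequentially"
    using Helly_selection_Dplus[of "\<lambda>k. X k k"] XD by blast
  note rr = filterlim_subseq[OF r]
  have "((\<lambda>(n, m). X n m (ereal t)) \<longlongrightarrow> L (ereal t)) (sequentially \<times>\<^sub>F sequentially)"
    if ct: "isCont (\<lambda>s. L (ereal s)) t" for t
  proof (rule ccontr)
    assume "\<not> ?thesis"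
    then obtain e where "e > 0" and "\<forall>N. \<exists>n\<ge>N. \<exists>m\<ge>N. e \<le> dist (X n m (ereal t)) (L (ereal t))"
      by (fastforce simp: tendsto_iff eventually_prod_sequentially not_less)
    then obtain i j where ij: "\<And>N. N \<le> i N" "\<And>N. N \<le> j N"
      and far: "\<And>N. e \<le> dist (X (i N) (j N) (ereal t)) (L (ereal t))"
      by metis
    have i: "filterlim i sequentially sequentially" and j: "filterlim j sequentially sequentially"
      using ij by (auto simp: filterlim_at_top eventually_sequentially intro: order_trans)
    obtain r' L' where r': "strict_mono r'" and L'D: "Dplus L'"
      and lim': "wconv (\<lambda>k. X (i (r' k)) (j (r' k))) L' sequentially"
      using Helly_selection_Dplus[of "\<lambda>k. X (i k) (j k)"] XD by blast
    note ir' = filterlim_compose[OF i filterlim_subseq[OF r']]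
    note jr' = filterlim_compose[OF j filterlim_subseq[OF r']]
    have "L' = L"
      using comparable[OF ir' jr' rr rr L'D LD lim' lim] comparable[OF rr rr ir' jr' LD L'D lim lim']
      by (rule antisym)
    with lim' ct have "(\<lambda>k. X (i (r' k)) (j (r' k)) (ereal t)) \<longlonglongrightarrow> L (ereal t)"
      by (simp add: wconv_def)
    with \<open>e > 0\<close> obtain k where "dist (X (i (r' k)) (j (r' k)) (ereal t)) (L (ereal t)) < e"
      by (metis (no_types, lifting) tendsto_iff eventually_sequentially order_refl)
    with far show False by (meson not_less)
  qed
  then have "wconv (\<lambda>(n, m). X n m) L (sequentially \<times>\<^sub>F sequentially)"
    by (simp add: wconv_def case_prod_unfold)
  with LD show ?thesis by blast
qed

section \<open>Probabilistic metric spaces\<close>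

lemma triangle_function_Dplus:
  "triangle_function star \<Longrightarrow> Dplus F \<Longrightarrow> Dplus L \<Longrightarrow> Dplus (star F L)"
  by (simp add: triangle_function_def)

lemma triangle_function_commute:
  "triangle_function star \<Longrightarrow> Dplus F \<Longrightarrow> Dplus L \<Longrightarrow> star F L = star L F"
  by (simp add: triangle_function_def)

lemma triangle_function_H0_right: "triangle_function star \<Longrightarrow> Dplus F \<Longrightarrow> star F H0 = F"
  by (simp add: triangle_function_def)

lemma triangle_function_H0_left: "triangle_function star \<Longrightarrow> Dplus F \<Longrightarrow> star H0 F = F"
  by (metis Dplus_H0 triangle_function_H0_right triangle_function_commute)

lemma triangle_function_mono_right:
  assumes "triangle_function star" "Dplus F" "Dplus L" "Dplus L'" "L \<le> L'"
  shows "star F L \<le> star F L'"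
proof -
  have "star F L = star L F" using assms by (simp add: triangle_function_commute)
  also have "\<dots> \<le> star L' F" using assms(1)[unfolded triangle_function_def] assms(2-5) by blast
  also have "\<dots> = star F L'" using assms by (simp add: triangle_function_commute)
  finally show ?thesis .
qed

lemma continuous_tfD:
  assumes "continuous_tf star" "\<And>n. Dplus (Fs n)" "\<And>n. Dplus (Ls n)" "Dplus F" "Dplus L"
    "wconv Fs F sequentially" "wconv Ls L sequentially"
  shows "wconv (\<lambda>n. star (Fs n) (Ls n)) (star F L) sequentially"
  using assms unfolding continuous_tf_def by blast

lemma pms_triangle_function: "pms G D star \<Longrightarrow> triangle_function star"
  by (simp add: pms_def)

lemma pms_Dplus: "pms G D star \<Longrightarrow> p \<in> G \<Longrightarrow> q \<in> G \<Longrightarrow> Dplus (D p q)"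
  by (simp add: pms_def)

lemma pms_sym: "pms G D star \<Longrightarrow> p \<in> G \<Longrightarrow> q \<in> G \<Longrightarrow> D p q = D q p"
  by (simp add: pms_def)

lemma pms_triangle:
  "pms G D star \<Longrightarrow> p \<in> G \<Longrightarrow> q \<in> G \<Longrightarrow> r \<in> G \<Longrightarrow> star (D p q) (D q r) \<le> D p r"
  by (simp add: pms_def)

lemma pm_cauchy_in: "pm_cauchy G D z \<Longrightarrow> z n \<in> G"
  by (simp add: pm_cauchy_def)

lemma pm_cauchy_wconv_H0:
  "pm_cauchy G D z \<Longrightarrow> wconv (\<lambda>(n, m). D (z n) (z m)) H0 (sequentially \<times>\<^sub>F sequentially)"
  unfolding pm_cauchy_def by blast

lemma pm_cauchy_wconv_H0_comp:
  assumes "pm_cauchy G D z" and "filterlim i sequentially F" and "filterlim j sequentially F"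
  shows "wconv (\<lambda>k. D (z (i k)) (z (j k))) H0 F"
  by (rule wconv_prod_compose[OF pm_cauchy_wconv_H0[OF assms(1)] assms(2,3)])

lemma pms_cross_limit_le:
  assumes P: "pms G D star" and CT: "continuous_tf star"
    and a: "pm_cauchy G D a" and b: "pm_cauchy G D b"
    and i: "filterlim i sequentially sequentially" and j: "filterlim j sequentially sequentially"
    and i': "filterlim i' sequentially sequentially" and j': "filterlim j' sequentially sequentially"
    and LD: "Dplus L" and L'D: "Dplus L'"
    and lim: "wconv (\<lambda>k. D (a (i k)) (b (j k))) L sequentially"
    and lim': "wconv (\<lambda>k. D (a (i' k)) (b (j' k))) L' sequentially"
  shows "L \<le> L'"
proof -
  note TF = pms_triangle_function[OF P]
  note aG = pm_cauchy_in[OF a] and bG = pm_cauchy_in[OF b]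
  note DD = pms_Dplus[OF P]
  define A where "A k = D (a (i' k)) (a (i k))" for k
  define X where "X k = D (a (i k)) (b (j k))" for k
  define B where "B k = D (b (j k)) (b (j' k))" for k
  have AD: "Dplus (A k)" and XD: "Dplus (X k)" and BD: "Dplus (B k)" and XBD: "Dplus (star (X k) (B k))"
    for k using aG bG by (simp_all add: A_def X_def B_def DD triangle_function_Dplus[OF TF])
  have "wconv (\<lambda>k. star (X k) (B k)) (star L H0) sequentially"
    using pm_cauchy_wconv_H0_comp[OF b j j'] lim
    by (intro continuous_tfD[OF CT XD BD LD Dplus_H0]) (simp_all add: X_def B_def)
  then have "wconv (\<lambda>k. star (A k) (star (X k) (B k))) (star H0 (star L H0)) sequentially"
    using pm_cauchy_wconv_H0_comp[OF a i' i] LD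
    by (intro continuous_tfD[OF CT AD XBD Dplus_H0]) (simp_all add: A_def TF triangle_function_H0_right)
  then have "wconv (\<lambda>k. star (A k) (star (X k) (B k))) L sequentially"
    using LD by (simp add: TF triangle_function_H0_right triangle_function_H0_left)
  moreover have "star (A k) (star (X k) (B k)) \<le> D (a (i' k)) (b (j' k))" for k
  proof -
    have "star (A k) (star (X k) (B k)) \<le> star (A k) (D (a (i k)) (b (j' k)))"
      using pms_triangle[OF P] aG bG
      by (intro triangle_function_mono_right[OF TF AD XBD]) (simp_all add: X_def B_def DD)
    also have "\<dots> \<le> D (a (i' k)) (b (j' k))"
      unfolding A_def by (rule pms_triangle[OF P aG aG bG])
    finally show ?thesis .
  qed
  ultimately show ?thesis
    using aG bG by (intro wconv_le[OF LD L'D _ lim']) (simp_all add: DD)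
qed

lemma pms_cross_limit_exists:
  assumes P: "pms G D star" and CT: "continuous_tf star"
    and a: "pm_cauchy G D a" and b: "pm_cauchy G D b"
  shows "\<exists>L. Dplus L \<and> wconv (\<lambda>(n, m). D (a n) (b m)) L (sequentially \<times>\<^sub>F sequentially)"
  using pm_cauchy_in[OF a] pm_cauchy_in[OF b]
  by (intro ex_wconv_prod_sequentially pms_cross_limit_le[OF P CT a b]) (simp_all add: pms_Dplus[OF P])

lemma wconv_representative_along:
  assumes P: "pms G D star" and fD: "\<And>x. x \<in> G \<Longrightarrow> Dplus (f x)"
    and aG: "\<And>n. a n \<in> G" and bG: "\<And>m. b m \<in> G"
    and fa: "\<And>x. x \<in> G \<Longrightarrow> wconv (\<lambda>n. D (a n) x) (f x) sequentially"
    and LD: "Dplus L" and lim: "wconv (\<lambda>(n, m). D (a n) (b m)) L (sequentially \<times>\<^sub>F sequentially)"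
  shows "wconv (\<lambda>m. f (b m)) L sequentially"
  using aG bG by (intro wconv_iterated_limit[OF _ LD _ lim] fa fD pms_Dplus[OF P])

lemma pms_cross_limit_along:
  assumes P: "pms G D star"
    and fD: "\<And>x. x \<in> G \<Longrightarrow> Dplus (f x)" and gD: "\<And>x. x \<in> G \<Longrightarrow> Dplus (g x)"
    and aG: "\<And>n. a n \<in> G" and bG: "\<And>n. b n \<in> G"
    and fa: "\<And>x. x \<in> G \<Longrightarrow> wconv (\<lambda>n. D (a n) x) (f x) sequentially"
    and gb: "\<And>x. x \<in> G \<Longrightarrow> wconv (\<lambda>n. D (b n) x) (g x) sequentially"
    and LD: "Dplus L" and lim: "wconv (\<lambda>(n, m). D (a n) (b m)) L (sequentially \<times>\<^sub>F sequentially)"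
  shows "wconv (\<lambda>n. D (a n) (b n)) L sequentially"
    and "wconv (\<lambda>m. f (b m)) L sequentially"
    and "wconv (\<lambda>n. g (a n)) L sequentially"
proof -
  show "wconv (\<lambda>n. D (a n) (b n)) L sequentially"
    using wconv_prod_compose[OF lim filterlim_ident filterlim_ident] .
  show "wconv (\<lambda>m. f (b m)) L sequentially"
    by (rule wconv_representative_along[OF P fD aG bG fa LD lim])
  have "(\<lambda>(m, n). D (a n) (b m)) = (\<lambda>(n, m). D (b n) (a m))"
    by (auto simp: fun_eq_iff pms_sym[OF P aG bG])
  then have lim_swap: "wconv (\<lambda>(n, m). D (b n) (a m)) L (sequentially \<times>\<^sub>F sequentially)"
    using wconv_prod_swap[OF lim] by simp
  show "wconv (\<lambda>n. g (a n)) L sequentially"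
    using P gD bG aG gb LD lim_swap by (rule wconv_representative_along)
qed

lemma pms_is_Dsup_cross_limit:
  assumes P: "pms G D star" and CT: "continuous_tf star"
    and fD: "\<And>x. x \<in> G \<Longrightarrow> Dplus (f x)" and gD: "\<And>x. x \<in> G \<Longrightarrow> Dplus (g x)"
    and a: "pm_cauchy G D a" and b: "pm_cauchy G D b"
    and fa: "\<And>x. x \<in> G \<Longrightarrow> wconv (\<lambda>n. D (a n) x) (f x) sequentially"
    and gb: "\<And>x. x \<in> G \<Longrightarrow> wconv (\<lambda>n. D (b n) x) (g x) sequentially"
    and LD: "Dplus L" and lim: "wconv (\<lambda>(n, m). D (a n) (b m)) L (sequentially \<times>\<^sub>F sequentially)"
  shows "is_Dsup {star (f x) (g x) | x. x \<in> G} L"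
proof -
  note TF = pms_triangle_function[OF P]
  note aG = pm_cauchy_in[OF a] and bG = pm_cauchy_in[OF b]
  note along = pms_cross_limit_along[OF P fD gD aG bG fa gb LD lim]
  have upper: "star (f x) (g x) \<le> L" if x: "x \<in> G" for x
  proof -
    have "wconv (\<lambda>n. star (D (a n) x) (D x (b n))) (star (f x) (g x)) sequentially"
      using fa gb x aG bG
      by (intro continuous_tfD[OF CT]) (simp_all add: fD gD pms_Dplus[OF P] pms_sym[OF P])
    moreover note along(1)
    moreover have "star (D (a n) x) (D x (b n)) \<le> D (a n) (b n)" for n
      by (rule pms_triangle[OF P aG x bG])
    ultimately show ?thesis
      by (rule wconv_le[OF triangle_function_Dplus[OF TF fD[OF x] gD[OF x]] LD _ _ sequentially_bot])
  qed
  have least: "L \<le> U" if UD: "Dplus U" and U: "\<And>x. x \<in> G \<Longrightarrow> star (f x) (g x) \<le> U" for U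
  proof -
    have "wconv (\<lambda>m. g (b m)) H0 sequentially"
      by (rule wconv_representative_along[OF P gD bG bG gb Dplus_H0 pm_cauchy_wconv_H0[OF b]])
    then have "wconv (\<lambda>m. star (f (b m)) (g (b m))) L sequentially"
      using continuous_tfD[OF CT _ _ LD Dplus_H0 along(2)] bG fD gD LD
      by (simp add: TF triangle_function_H0_right)
    moreover have "star (f (b m)) (g (b m)) \<le> U" for m using U bG by blast
    ultimately show ?thesis by (rule wconv_le[OF LD UD _ wconv_const sequentially_bot])
  qed
  show ?thesis
    unfolding is_Dsup_def using LD upper least by blast
qed

lemma pms_cross_limit:
  assumes P: "pms G D star" and CT: "continuous_tf star"
    and fD: "\<And>x. x \<in> G \<Longrightarrow> Dplus (f x)" and gD: "\<And>x. x \<in> G \<Longrightarrow> Dplus (g x)"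
    and a: "pm_cauchy G D a" and b: "pm_cauchy G D b"
    and fa: "\<forall>x\<in>G. wconv (\<lambda>n. D (a n) x) (f x) sequentially"
    and gb: "\<forall>x\<in>G. wconv (\<lambda>n. D (b n) x) (g x) sequentially"
  shows "\<exists>L. is_Dsup {star (f x) (g x) | x. x \<in> G} L
    \<and> wconv (\<lambda>(n, m). D (a n) (b m)) L (sequentially \<times>\<^sub>F sequentially)
    \<and> wconv (\<lambda>n. D (a n) (b n)) L sequentially
    \<and> wconv (\<lambda>m. f (b m)) L sequentially
    \<and> wconv (\<lambda>n. g (a n)) L sequentially"
proof -
  obtain L where LD: "Dplus L"
    and lim: "wconv (\<lambda>(n, m). D (a n) (b m)) L (sequentially \<times>\<^sub>F sequentially)"
    using pms_cross_limit_exists[OF P CT a b] by blast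
  moreover note pms_is_Dsup_cross_limit[where f = f and g = g,
      OF P CT fD gD a b bspec[OF fa] bspec[OF gb] LD lim]
  moreover note pms_cross_limit_along[where f = f and g = g,
      OF P fD gD pm_cauchy_in[OF a] pm_cauchy_in[OF b] bspec[OF fa] bspec[OF gb] LD lim]
  ultimately show ?thesis by blast
qed

theorem mainTheorem10:
  fixes G :: "'a set" and D :: "'a \<Rightarrow> 'a \<Rightarrow> dfun" and star :: "dfun \<Rightarrow> dfun \<Rightarrow> dfun"
    and f g :: "'a \<Rightarrow> dfun"
  assumes "pms G D star" and "continuous_tf star"
    and "PiG G D star f" and "PiG G D star g"
  shows "\<exists>L. is_Dsup {star (f x) (g x) | x. x \<in> G} L \<and>
     (\<forall>a b. pm_cauchy G D a \<and> pm_cauchy G D b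
        \<and> (\<forall>x\<in>G. wconv (\<lambda>n. D (a n) x) (f x) sequentially)
        \<and> (\<forall>x\<in>G. wconv (\<lambda>n. D (b n) x) (g x) sequentially)
      \<longrightarrow> wconv (\<lambda>(n, m). D (a n) (b m)) L (sequentially \<times>\<^sub>F sequentially)
        \<and> wconv (\<lambda>n. D (a n) (b n)) L sequentially
        \<and> wconv (\<lambda>m. f (b m)) L sequentially
        \<and> wconv (\<lambda>n. g (a n)) L sequentially)"
proof -
  have fD: "\<And>x. x \<in> G \<Longrightarrow> Dplus (f x)" and gD: "\<And>x. x \<in> G \<Longrightarrow> Dplus (g x)"
    using assms(3,4) by (simp_all add: PiG_def prob_lip1_def)
  note cross_limit = pms_cross_limit[where f = f and g = g, OF assms(1,2) fD gD]
  obtain a0 b0 where "pm_cauchy G D a0" "\<forall>x\<in>G. wconv (\<lambda>n. D (a0 n) x) (f x) sequentially"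
    and "pm_cauchy G D b0" "\<forall>x\<in>G. wconv (\<lambda>n. D (b0 n) x) (g x) sequentially"
    using assms(3,4) by (auto simp: PiG_def)
  then obtain L where L: "is_Dsup {star (f x) (g x) | x. x \<in> G} L"
    using cross_limit by blast
  show ?thesis
  proof (intro exI[of _ L] conjI[OF L] allI impI, elim conjE)
    fix a b assume "pm_cauchy G D a" "pm_cauchy G D b"
      "\<forall>x\<in>G. wconv (\<lambda>n. D (a n) x) (f x) sequentially"
      "\<forall>x\<in>G. wconv (\<lambda>n. D (b n) x) (g x) sequentially"
    then obtain L' where "is_Dsup {star (f x) (g x) | x. x \<in> G} L'"
      and lims: "wconv (\<lambda>(n, m). D (a n) (b m)) L' (sequentially \<times>\<^sub>F sequentially)
        \<and> wconv (\<lambda>n. D (a n) (b n)) L' sequentially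
        \<and> wconv (\<lambda>m. f (b m)) L' sequentially \<and> wconv (\<lambda>n. g (a n)) L' sequentially"
      using cross_limit by blast
    moreover from this(1) L have "L' = L" by (rule is_Dsup_unique)
    ultimately show "wconv (\<lambda>(n, m). D (a n) (b m)) L (sequentially \<times>\<^sub>F sequentially)
        \<and> wconv (\<lambda>n. D (a n) (b n)) L sequentially
        \<and> wconv (\<lambda>m. f (b m)) L sequentially \<and> wconv (\<lambda>n. g (a n)) L sequentially"
      by simp
  qed
qed

end
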